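(* Let $(X,d)$ be a nonempty metric space, let $p:[0,1]\to X$ be a rectifiable path with range $Y=p([0,1])$, and let $F:X\rightarrow K(X)$ and $\beta\in[0,1]$ be such that $s_Y(F(x))<\beta$ for all $x\in Y$. Then $l(F\circ p)\le\beta\, l(p)<\infty$, where $l(F\circ p):=\sup_{\pi\in\Pi}\sum_{i=1}^n H(F(p(t_{i-1})),F(p(t_i)))$.
   Context: $\Pi$ is the set of finite partitions $0=t_0<\cdots<t_n=1$ of $[0,1]$; $l(p)=\sup_{\pi\in\Pi}\sum_i d(p(t_{i-1}),p(t_i))$, and $p$ is rectifiable if $p$ is continuous and $l(p)<\infty$. $K(X)$ is the set of nonempty compact subsets of $X$; $H$ is the Hausdorff distance. For $x\in Y$, $s_Y(F(x)):=\limsup_{y\to x,\ y\in Y\setminus\{x\}}\frac{H(F(x),F(y))}{d(x,y)}$ if $x$ is a limit point of $Y$, and $s_Y(F(x))=0$ otherwise. *)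

theory Defs
  imports "HOL-Analysis.Analysis"
begin

definition hausdorff_dist :: "'a::metric_space set \<Rightarrow> 'a set \<Rightarrow> real" where
  "hausdorff_dist A B = max (SUP a\<in>A. infdist a B) (SUP b\<in>B. infdist b A)"

definition partitions01 :: "(nat \<times> (nat \<Rightarrow> real)) set" where
  "partitions01 = {(n, t). n \<ge> 1 \<and> t 0 = 0 \<and> t n = 1 \<and> (\<forall>i<n. t i < t (Suc i))}"

definition variation_wrt :: "('b \<Rightarrow> 'b \<Rightarrow> real) \<Rightarrow> (real \<Rightarrow> 'b) \<Rightarrow> ereal" where
  "variation_wrt d f = (SUP nt\<in>partitions01.
      ereal (\<Sum>i\<in>{1..fst nt}. d (f (snd nt (i - 1))) (f (snd nt i))))"

definition path_len :: "(real \<Rightarrow> 'a::metric_space) \<Rightarrow> ereal" where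
  "path_len p = variation_wrt dist p"

definition rectifiable :: "(real \<Rightarrow> 'a::metric_space) \<Rightarrow> bool" where
  "rectifiable p \<longleftrightarrow> continuous_on {0..1} p \<and> path_len p < \<infinity>"

definition slope_Y :: "'a::metric_space set \<Rightarrow> ('a \<Rightarrow> 'a set) \<Rightarrow> 'a \<Rightarrow> ereal" where
  "slope_Y Y F x = (if x islimpt Y
     then Limsup (at x within (Y - {x})) (\<lambda>y. ereal (hausdorff_dist (F x) (F y) / dist x y))
     else 0)"

end

theory Submission
  imports Defs
begin

text \<open>Write V(x) for the length of p on [0,x]. Since the slope of F along Y is below \<beta>, every
  parameter has a neighbourhood on which H(F(p s), F(p t)) \<le> \<beta> d(p s, p t) \<le> \<beta> |V t - V s|.
  A supremum (real induction) argument turns this local bound into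
  H(F(p a), F(p b)) \<le> \<beta> (V b - V a) for all a \<le> b, and summed over a partition it telescopes
  to \<beta> V(1) \<le> \<beta> l(p).\<close>

lemma bdd_above_infdist_image:
  fixes A :: "'a::metric_space set"
  assumes "compact A"
  shows "bdd_above ((\<lambda>a. infdist a B) ` A)"
proof -
  have "compact ((\<lambda>a. infdist a B) ` A)"
    by (intro compact_continuous_image continuous_intros assms)
  then show ?thesis by (simp add: bounded_imp_bdd_above compact_imp_bounded)
qed

lemma infdist_le_hausdorff_dist:
  assumes "compact A" "a \<in> A"
  shows "infdist a B \<le> hausdorff_dist A B"
proof -
  have "infdist a B \<le> (SUP a\<in>A. infdist a B)"
    using bdd_above_infdist_image[OF assms(1)] assms(2) by (intro cSUP_upper)
  then show ?thesis unfolding hausdorff_dist_def by linarith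
qed

lemma hausdorff_dist_commute: "hausdorff_dist A B = hausdorff_dist B A"
  unfolding hausdorff_dist_def by (simp add: max.commute)

lemma hausdorff_dist_self:
  assumes "A \<noteq> {}"
  shows "hausdorff_dist A A = 0"
  using assms unfolding hausdorff_dist_def by (simp cong: SUP_cong)

lemma infdist_le_infdist_plus_hausdorff_dist:
  assumes "compact B" "B \<noteq> {}"
  shows "infdist a C \<le> infdist a B + hausdorff_dist B C"
proof -
  have "infdist a C - hausdorff_dist B C \<le> dist a b" if "b \<in> B" for b
    using infdist_triangle[of a C b] infdist_le_hausdorff_dist[OF assms(1) that, of C]
    by linarith
  then have "infdist a C - hausdorff_dist B C \<le> (INF b\<in>B. dist a b)"
    using assms(2) by (intro cINF_greatest) auto
  then show ?thesis using assms(2) by (simp add: infdist_notempty)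
qed

lemma hausdorff_dist_triangle:
  assumes "compact A" "A \<noteq> {}" "compact B" "B \<noteq> {}" "compact C" "C \<noteq> {}"
  shows "hausdorff_dist A C \<le> hausdorff_dist A B + hausdorff_dist B C"
proof -
  have "(SUP a\<in>A. infdist a C) \<le> hausdorff_dist A B + hausdorff_dist B C"
  proof (rule cSUP_least)
    fix a assume "a \<in> A"
    show "infdist a C \<le> hausdorff_dist A B + hausdorff_dist B C"
      using infdist_le_infdist_plus_hausdorff_dist[OF assms(3,4), of a C]
        infdist_le_hausdorff_dist[OF assms(1) \<open>a \<in> A\<close>, of B] by linarith
  qed (use assms in simp)
  moreover have "(SUP c\<in>C. infdist c A) \<le> hausdorff_dist A B + hausdorff_dist B C"
  proof (rule cSUP_least)
    fix c assume "c \<in> C"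
    show "infdist c A \<le> hausdorff_dist A B + hausdorff_dist B C"
      using infdist_le_infdist_plus_hausdorff_dist[OF assms(3,4), of c A]
        infdist_le_hausdorff_dist[OF assms(5) \<open>c \<in> C\<close>, of B]
        hausdorff_dist_commute[of A B] hausdorff_dist_commute[of B C] by linarith
  qed (use assms in simp)
  ultimately show ?thesis unfolding hausdorff_dist_def by simp
qed

definition chains :: "real \<Rightarrow> real \<Rightarrow> (nat \<times> (nat \<Rightarrow> real)) set" where
  "chains a b = {(n, t). t 0 = a \<and> t n = b \<and> (\<forall>i<n. t i < t (Suc i))}"

fun chain_sum :: "('b \<Rightarrow> 'b \<Rightarrow> real) \<Rightarrow> (real \<Rightarrow> 'b) \<Rightarrow> nat \<times> (nat \<Rightarrow> real) \<Rightarrow> real" where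
  "chain_sum d f (n, t) = (\<Sum>i<n. d (f (t i)) (f (t (Suc i))))"

lemma partitions01_eq_chains: "partitions01 = chains 0 1"
  unfolding partitions01_def chains_def by (auto simp: Suc_le_eq intro: gr0I)

lemma variation_wrt_eq_SUP_chains:
  "variation_wrt d f = (SUP c\<in>chains 0 1. ereal (chain_sum d f c))"
  unfolding variation_wrt_def partitions01_eq_chains
  by (intro SUP_cong) (auto simp: sum.atLeast1_atMost_eq)

lemma chains_nonempty:
  assumes "a \<le> b"
  shows "chains a b \<noteq> {}"
proof (cases "a = b")
  case True
  then have "(0, \<lambda>_. a) \<in> chains a b" unfolding chains_def by simp
  then show ?thesis by blast
next
  case False
  then have "(1, \<lambda>i. if i = 0 then a else b) \<in> chains a b"
    using assms unfolding chains_def by simp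
  then show ?thesis by blast
qed

lemma chain_mono:
  assumes "(n, t) \<in> chains a b" "i \<le> j" "j \<le> n"
  shows "t i \<le> t j"
  using assms(2,3)
proof (induction j rule: dec_induct)
  case (step k)
  then have "t k < t (Suc k)" using assms(1) unfolding chains_def by simp
  with step show ?case by simp
qed simp

lemma chain_in_interval:
  assumes "(n, t) \<in> chains a b" "i \<le> n"
  shows "t i \<in> {a..b}"
  using chain_mono[OF assms(1), of 0 i] chain_mono[OF assms(1), of i n] assms
  unfolding chains_def by simp

lemma chain_snoc:
  assumes "(n, t) \<in> chains a b" "b < c"
  shows "(Suc n, t(Suc n := c)) \<in> chains a c"
  using assms unfolding chains_def by (auto simp: less_Suc_eq)

lemma chain_sum_snoc:
  assumes "(n, t) \<in> chains a b"
  shows "chain_sum d f (Suc n, t(Suc n := c)) = chain_sum d f (n, t) + d (f b) (f c)"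
  using assms unfolding chains_def by (auto intro!: sum.cong)

lemma chain_sum_dist_nonneg: "0 \<le> chain_sum dist f c"
  by (cases c) (simp add: sum_nonneg)

lemma chain_sum_le_telescope:
  assumes "c \<in> chains a b"
    and "\<And>x y. a \<le> x \<Longrightarrow> x \<le> y \<Longrightarrow> y \<le> b \<Longrightarrow> d (f x) (f y) \<le> W y - W x"
  shows "chain_sum d f c \<le> W b - W a"
proof -
  obtain n t where c: "c = (n, t)" by fastforce
  have "chain_sum d f c \<le> (\<Sum>i<n. W (t (Suc i)) - W (t i))"
    unfolding c chain_sum.simps
  proof (rule sum_mono)
    fix i assume "i \<in> {..<n}"
    then show "d (f (t i)) (f (t (Suc i))) \<le> W (t (Suc i)) - W (t i)"
      using assms(1) chain_in_interval[of n t a b] chain_mono[of n t a b i "Suc i"]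
      unfolding c by (intro assms(2)) auto
  qed
  also have "\<dots> = W b - W a"
    using assms(1) sum_lessThan_telescope[of "\<lambda>i. W (t i)" n] unfolding c chains_def by simp
  finally show ?thesis .
qed

lemma chain_sum_le_path_len:
  assumes "c \<in> chains 0 x" "x \<le> 1"
  shows "ereal (chain_sum dist p c) \<le> path_len p"
proof -
  have to1: "ereal (chain_sum dist p c') \<le> path_len p" if "c' \<in> chains 0 1" for c'
    unfolding path_len_def variation_wrt_eq_SUP_chains using that by (rule SUP_upper)
  show ?thesis
  proof (cases "x = 1")
    case False
    obtain n t where c: "c = (n, t)" by fastforce
    have "chain_sum dist p c \<le> chain_sum dist p (Suc n, t(Suc n := 1))"
      using chain_sum_snoc[of n t 0 x dist p 1] assms(1) c by simp
    moreover have "(Suc n, t(Suc n := 1)) \<in> chains 0 1"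
      using chain_snoc[of n t 0 x 1] assms False c by simp
    ultimately show ?thesis using to1 order_trans ereal_less_eq(3) by blast
  qed (use assms to1 in simp)
qed

lemma path_len_nonneg: "0 \<le> path_len p"
proof -
  have "(0, \<lambda>_. 0) \<in> chains 0 0" unfolding chains_def by simp
  from chain_sum_le_path_len[OF this] show ?thesis by (simp add: zero_ereal_def)
qed

text \<open>This real supremum is junk unless the chain sums are bounded, hence the finiteness
  assumption on the path length in the lemmas below.\<close>

definition length_upto :: "(real \<Rightarrow> 'a::metric_space) \<Rightarrow> real \<Rightarrow> real" where
  "length_upto p x = Sup (chain_sum dist p ` chains 0 x)"

lemma chain_sum_le_real_path_len:
  assumes "path_len p < \<infinity>" "c \<in> chains 0 x" "x \<le> 1"
  shows "chain_sum dist p c \<le> real_of_ereal (path_len p)"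
  using chain_sum_le_path_len[OF assms(2,3), of p] assms(1) path_len_nonneg[of p]
  by (cases "path_len p") auto

lemma chain_sum_le_length_upto:
  assumes "path_len p < \<infinity>" "c \<in> chains 0 x" "x \<le> 1"
  shows "chain_sum dist p c \<le> length_upto p x"
  unfolding length_upto_def using assms chain_sum_le_real_path_len
  by (intro cSup_upper bdd_aboveI) auto

lemma length_upto_le_path_len:
  assumes "path_len p < \<infinity>" "0 \<le> x" "x \<le> 1"
  shows "length_upto p x \<le> real_of_ereal (path_len p)"
  unfolding length_upto_def using assms chains_nonempty chain_sum_le_real_path_len
  by (intro cSup_least) auto

lemma length_upto_nonneg:
  assumes "path_len p < \<infinity>" "0 \<le> x" "x \<le> 1"
  shows "0 \<le> length_upto p x"
  using assms chains_nonempty[of 0 x] chain_sum_le_length_upto chain_sum_dist_nonneg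
  by (meson all_not_in_conv order_trans)

lemma length_upto_add_dist:
  assumes "path_len p < \<infinity>" "0 \<le> x" "x \<le> y" "y \<le> 1"
  shows "length_upto p x + dist (p x) (p y) \<le> length_upto p y"
proof (cases "x = y")
  case False
  have "length_upto p x \<le> length_upto p y - dist (p x) (p y)"
    unfolding length_upto_def[of p x]
  proof (rule cSup_least)
    show "chain_sum dist p ` chains 0 x \<noteq> {}" using chains_nonempty assms by blast
    fix s assume "s \<in> chain_sum dist p ` chains 0 x"
    then obtain n t where nt: "(n, t) \<in> chains 0 x" "s = chain_sum dist p (n, t)" by auto
    have "(Suc n, t(Suc n := y)) \<in> chains 0 y"
      using chain_snoc[OF nt(1)] assms False by simp
    from chain_sum_le_length_upto[OF assms(1) this assms(4)]
    show "s \<le> length_upto p y - dist (p x) (p y)"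
      using chain_sum_snoc[OF nt(1), of dist p y] nt(2) by linarith
  qed
  then show ?thesis by simp
qed simp

lemma real_interval_induct:
  fixes a b :: real
  assumes "a \<le> b" "P a"
    and step: "\<And>c. c \<in> {a..b} \<Longrightarrow> \<exists>\<delta>>0. \<forall>x\<in>{a..b}.
      (c - \<delta> < x \<and> x < c \<and> P x \<longrightarrow> P c) \<and> (c < x \<and> x < c + \<delta> \<and> P c \<longrightarrow> P x)"
  shows "P b"
proof -
  define S where "S = {y\<in>{a..b}. P y}"
  define c where "c = Sup S"
  have "a \<in> S" using assms unfolding S_def by simp
  have bdd: "bdd_above S" unfolding S_def by (auto intro: bdd_aboveI[of _ b])
  have "a \<le> c" unfolding c_def using \<open>a \<in> S\<close> bdd by (rule cSup_upper)
  moreover have "c \<le> b" unfolding c_def using \<open>a \<in> S\<close> by (intro cSup_least) (auto simp: S_def)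
  ultimately have "c \<in> {a..b}" by simp
  then obtain \<delta> where "\<delta> > 0" and \<delta>: "\<forall>x\<in>{a..b}.
      (c - \<delta> < x \<and> x < c \<and> P x \<longrightarrow> P c) \<and> (c < x \<and> x < c + \<delta> \<and> P c \<longrightarrow> P x)"
    using step by blast
  have "P c"
  proof (cases "c \<in> S")
    case False
    obtain x where "x \<in> S" "c - \<delta> < x"
      using less_cSupE[of "c - \<delta>" S] \<open>a \<in> S\<close> \<open>\<delta> > 0\<close> unfolding c_def by auto
    moreover have "x \<le> c" unfolding c_def using \<open>x \<in> S\<close> bdd by (rule cSup_upper)
    ultimately show ?thesis using \<delta> False unfolding S_def by (cases "x = c") auto
  qed (simp add: S_def)
  have "c = b"
  proof (rule ccontr)
    assume "c \<noteq> b"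
    define y where "y = min b (c + \<delta> / 2)"
    have "c < y" "y \<in> {a..b}" "y < c + \<delta>"
      using \<open>c \<noteq> b\<close> \<open>c \<in> {a..b}\<close> \<open>\<delta> > 0\<close> unfolding y_def by auto
    then have "y \<in> S" using \<delta> \<open>P c\<close> unfolding S_def by blast
    then have "y \<le> c" unfolding c_def using bdd by (rule cSup_upper)
    with \<open>c < y\<close> show False by simp
  qed
  with \<open>P c\<close> show ?thesis by simp
qed

lemma increment_le_of_local_increment_le:
  fixes g :: "real \<Rightarrow> 'b" and D :: "'b \<Rightarrow> 'b \<Rightarrow> real" and W :: "real \<Rightarrow> real"
  assumes "a \<le> b" "D (g a) (g a) \<le> 0"
    and triangle: "\<And>x y z. D (g x) (g z) \<le> D (g x) (g y) + D (g y) (g z)"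
    and local: "\<And>c. c \<in> {a..b} \<Longrightarrow> \<exists>\<delta>>0. \<forall>s\<in>{a..b}. \<bar>s - c\<bar> < \<delta> \<longrightarrow>
      (s \<le> c \<longrightarrow> D (g s) (g c) \<le> W c - W s) \<and> (c \<le> s \<longrightarrow> D (g c) (g s) \<le> W s - W c)"
  shows "D (g a) (g b) \<le> W b - W a"
proof (rule real_interval_induct[where P = "\<lambda>y. D (g a) (g y) \<le> W y - W a"])
  show "D (g a) (g a) \<le> W a - W a" using assms(2) by simp
  fix c assume "c \<in> {a..b}"
  from local[OF this] obtain \<delta> where "\<delta> > 0" and \<delta>: "\<forall>s\<in>{a..b}. \<bar>s - c\<bar> < \<delta> \<longrightarrow>
      (s \<le> c \<longrightarrow> D (g s) (g c) \<le> W c - W s) \<and> (c \<le> s \<longrightarrow> D (g c) (g s) \<le> W s - W c)"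
    by blast
  have "(c - \<delta> < x \<and> x < c \<and> D (g a) (g x) \<le> W x - W a \<longrightarrow> D (g a) (g c) \<le> W c - W a) \<and>
        (c < x \<and> x < c + \<delta> \<and> D (g a) (g c) \<le> W c - W a \<longrightarrow> D (g a) (g x) \<le> W x - W a)"
    if "x \<in> {a..b}" for x
    using \<delta>[rule_format, OF that] triangle[of a x c] triangle[of a c x] by auto
  with \<open>\<delta> > 0\<close> show "\<exists>\<delta>>0. \<forall>x\<in>{a..b}.
      (c - \<delta> < x \<and> x < c \<and> D (g a) (g x) \<le> W x - W a \<longrightarrow> D (g a) (g c) \<le> W c - W a) \<and>
      (c < x \<and> x < c + \<delta> \<and> D (g a) (g c) \<le> W c - W a \<longrightarrow> D (g a) (g x) \<le> W x - W a)"
    by blast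
qed (use assms in auto)

lemma hausdorff_dist_le_near_of_slope_Y_less:
  assumes "x \<in> Y" "slope_Y Y F x < ereal \<beta>" "F x \<noteq> {}"
  obtains e where "e > 0"
    "\<And>y. y \<in> Y \<Longrightarrow> dist y x < e \<Longrightarrow> hausdorff_dist (F x) (F y) \<le> \<beta> * dist x y"
proof (cases "x islimpt Y")
  case True
  then have "Limsup (at x within (Y - {x})) (\<lambda>y. ereal (hausdorff_dist (F x) (F y) / dist x y))
      < ereal \<beta>"
    using assms(2) unfolding slope_Y_def by simp
  from Limsup_lessD[OF this] obtain e where "e > 0" and e: "\<forall>y\<in>Y - {x}. y \<noteq> x \<and> dist y x < e
      \<longrightarrow> ereal (hausdorff_dist (F x) (F y) / dist x y) < ereal \<beta>"
    unfolding eventually_at by blast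
  show ?thesis
  proof (rule that[OF \<open>e > 0\<close>])
    fix y assume "y \<in> Y" "dist y x < e"
    show "hausdorff_dist (F x) (F y) \<le> \<beta> * dist x y"
    proof (cases "y = x")
      case False
      then have "hausdorff_dist (F x) (F y) / dist x y < \<beta>"
        using e \<open>y \<in> Y\<close> \<open>dist y x < e\<close> by simp
      moreover have "dist x y > 0" using False by simp
      ultimately show ?thesis by (simp add: divide_less_eq)
    qed (simp add: hausdorff_dist_self assms(3))
  qed
next
  case False
  then obtain e where "e > 0" "\<forall>y\<in>Y. y \<noteq> x \<longrightarrow> e \<le> dist y x"
    unfolding islimpt_approachable by (auto simp: not_less)
  then show ?thesis
    using that[of e] hausdorff_dist_self[OF assms(3)] by fastforce
qed

lemma hausdorff_dist_along_path_le:
  fixes p :: "real \<Rightarrow> 'a::metric_space"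
  assumes "rectifiable p"
    and F: "\<And>x. F x \<noteq> {} \<and> compact (F x)"
    and "0 \<le> \<beta>"
    and slope: "\<And>x. x \<in> p ` {0..1} \<Longrightarrow> slope_Y (p ` {0..1}) F x < ereal \<beta>"
    and "0 \<le> a" "a \<le> b" "b \<le> 1"
  shows "hausdorff_dist (F (p a)) (F (p b)) \<le> \<beta> * length_upto p b - \<beta> * length_upto p a"
proof (rule increment_le_of_local_increment_le
    [where g = "\<lambda>s. F (p s)" and W = "\<lambda>s. \<beta> * length_upto p s"])
  have cont: "continuous_on {0..1} p" and fin: "path_len p < \<infinity>"
    using assms(1) unfolding rectifiable_def by auto
  fix c assume "c \<in> {a..b}"
  then have c: "c \<in> {0..1}" using assms by auto
  obtain e where "e > 0" and e: "\<And>y. y \<in> p ` {0..1} \<Longrightarrow> dist y (p c) < e \<Longrightarrow>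
      hausdorff_dist (F (p c)) (F y) \<le> \<beta> * dist (p c) y"
    using hausdorff_dist_le_near_of_slope_Y_less[OF _ slope] c F by blast
  obtain \<delta> where "\<delta> > 0" and \<delta>: "\<forall>s\<in>{0..1}. dist s c < \<delta> \<longrightarrow> dist (p s) (p c) < e"
    using cont c \<open>e > 0\<close> unfolding continuous_on_iff by meson
  have near: "hausdorff_dist (F (p c)) (F (p s)) \<le> \<beta> * dist (p c) (p s)"
    if "s \<in> {a..b}" "\<bar>s - c\<bar> < \<delta>" for s
    using e \<delta> that assms by (auto simp: dist_real_def)
  have dominated: "\<beta> * dist (p x) (p y) \<le> \<beta> * length_upto p y - \<beta> * length_upto p x"
    if "x \<in> {a..b}" "y \<in> {a..b}" "x \<le> y" for x y
  proof -
    have "dist (p x) (p y) \<le> length_upto p y - length_upto p x"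
      using length_upto_add_dist[OF fin, of x y] that assms by simp
    from mult_left_mono[OF this \<open>0 \<le> \<beta>\<close>] show ?thesis by (simp add: right_diff_distrib)
  qed
  have "hausdorff_dist (F (p s)) (F (p c)) \<le> \<beta> * length_upto p c - \<beta> * length_upto p s"
    if "s \<in> {a..b}" "\<bar>s - c\<bar> < \<delta>" "s \<le> c" for s
    using near[OF that(1,2)] dominated[OF that(1) \<open>c \<in> {a..b}\<close> that(3)]
    by (simp add: hausdorff_dist_commute dist_commute)
  moreover have "hausdorff_dist (F (p c)) (F (p s)) \<le> \<beta> * length_upto p s - \<beta> * length_upto p c"
    if "s \<in> {a..b}" "\<bar>s - c\<bar> < \<delta>" "c \<le> s" for s
    using near[OF that(1,2)] dominated[OF \<open>c \<in> {a..b}\<close> that(1,3)] by simp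
  ultimately show "\<exists>\<delta>>0. \<forall>s\<in>{a..b}. \<bar>s - c\<bar> < \<delta> \<longrightarrow>
      (s \<le> c \<longrightarrow> hausdorff_dist (F (p s)) (F (p c))
         \<le> \<beta> * length_upto p c - \<beta> * length_upto p s) \<and>
      (c \<le> s \<longrightarrow> hausdorff_dist (F (p c)) (F (p s))
         \<le> \<beta> * length_upto p s - \<beta> * length_upto p c)"
    using \<open>\<delta> > 0\<close> by blast
qed (use assms in \<open>auto intro: hausdorff_dist_triangle simp: hausdorff_dist_self\<close>)

theorem lemma16:
  fixes p :: "real \<Rightarrow> 'a::metric_space" and F :: "'a \<Rightarrow> 'a set" and \<beta> :: real
  assumes "rectifiable p"
    and "\<And>x. F x \<noteq> {} \<and> compact (F x)"
    and "0 \<le> \<beta>" and "\<beta> \<le> 1"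
    and "\<And>x. x \<in> p ` {0..1} \<Longrightarrow> slope_Y (p ` {0..1}) F x < ereal \<beta>"
  shows "variation_wrt hausdorff_dist (F \<circ> p) \<le> ereal \<beta> * path_len p
         \<and> ereal \<beta> * path_len p < \<infinity>"
proof -
  have fin: "path_len p < \<infinity>" using assms(1) unfolding rectifiable_def by simp
  define L where "L = real_of_ereal (path_len p)"
  have len: "path_len p = ereal L"
    using fin path_len_nonneg[of p] unfolding L_def by (cases "path_len p") auto
  have "chain_sum hausdorff_dist (F \<circ> p) c \<le> \<beta> * L" if "c \<in> chains 0 1" for c
  proof -
    have "chain_sum hausdorff_dist (F \<circ> p) c
        \<le> \<beta> * length_upto p 1 - \<beta> * length_upto p 0"
      using hausdorff_dist_along_path_le[OF assms(1-3,5)]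
      by (intro chain_sum_le_telescope[OF that]) simp
    also have "\<dots> \<le> \<beta> * L"
      using mult_left_mono[OF length_upto_le_path_len[OF fin, of 1] assms(3)]
        mult_nonneg_nonneg[OF assms(3) length_upto_nonneg[OF fin, of 0]]
      unfolding L_def by simp
    finally show ?thesis .
  qed
  then have "variation_wrt hausdorff_dist (F \<circ> p) \<le> ereal (\<beta> * L)"
    unfolding variation_wrt_eq_SUP_chains by (intro SUP_least) simp
  then show ?thesis using len by simp
qed

end
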